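(* For every integer $n>0$, $\phi(e_n)=t$.
   Context: $e_n=\sum_{i_1<i_2<\dots<i_n,\ i_j\in\mathbb{Z}}x_{i_1}x_{i_2}\cdots x_{i_n}$ in commuting variables $x_i$, $i\in\mathbb{Z}$. A signed graph is a finite graph (loops and multiple edges allowed) with $\mathrm{sgn}:E\to\{+,-\}$; a coloring $\kappa:V\to\mathbb{Z}$ is proper if $\kappa(u)\ne\mathrm{sgn}(e)\kappa(v)$ for every edge $e$ with endpoints $u,v$. An orientation assigns to each half-edge (a loop has two) an arrow toward or away from the vertex, such that on a positive edge exactly one of the two arrows points toward its vertex and on a negative edge both point toward or both point away. A cycle is a closed walk in which, considering only the edges of the walk, every vertex of the walk has at least one arrow pointing into it and one pointing out of it; an orientation is acyclic if it has no cycle; a sink is a vertex all of whose incident arrows point toward it (an isolated vertex is a sink). A signed poset is an acyclic orientation $P$ of a signed graph. A proper coloring $\kappa$ preserves $P$ if for every edge $e$ and each endpoint $v$ of $e$, with $u$ the other endpoint ($u=v$ for a loop), the arrow of $P$ at the incidence of $e$ with $v$ points toward $v$ iff $\kappa(v)>\mathrm{sgn}(e)\kappa(u)$. $Y_P=\sum_\kappa\prod_v x_{\kappa(v)}$ over proper colorings preserving $P$; $\mathbb{Y}$ is the $\mathbb{Q}$-span of all $Y_P$ (it is closed under products and contains each $e_n$). $\phi:\mathbb{Y}\to\mathbb{Q}[t]$ is the (unique) $\mathbb{Q}$-linear map with $\phi(Y_P)=t^{\mathrm{sink}(P)}$, $\mathrm{sink}(P)$ the number of sinks of $P$ (its existence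 is established in the paper). *)

theory Defs
  imports Main "HOL-Library.Multiset" "HOL-Library.FuncSet"
    "HOL-Computational_Algebra.Polynomial"
begin

text \<open>A signed graph with an orientation.
  Edge e has two ends, ends e True and ends e False (equal for a loop).
  pos e: the sign of e is positive. arr e b: the arrow at the half-edge (e,b)
  points toward its vertex ends e b.\<close>
record sposet =
  V :: "nat set"
  E :: "nat set"
  ends :: "nat \<Rightarrow> bool \<Rightarrow> nat"
  pos :: "nat \<Rightarrow> bool"
  arr :: "nat \<Rightarrow> bool \<Rightarrow> bool"

definition sgnval :: "sposet \<Rightarrow> nat \<Rightarrow> int" where
  "sgnval P e = (if pos P e then 1 else -1)"

definition is_orientation :: "sposet \<Rightarrow> bool" where
  "is_orientation P \<longleftrightarrow> finite (V P) \<and> finite (E P) \<and>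
     (\<forall>e\<in>E P. \<forall>b. ends P e b \<in> V P) \<and>
     (\<forall>e\<in>E P. (pos P e \<longleftrightarrow> arr P e True \<noteq> arr P e False))"

text \<open>A walk is a list of (e,b): traverse edge e from ends e b to ends e (\<not>b).\<close>
definition closed_walk :: "sposet \<Rightarrow> (nat \<times> bool) list \<Rightarrow> bool" where
  "closed_walk P ws \<longleftrightarrow> ws \<noteq> [] \<and> (\<forall>(e,b)\<in>set ws. e \<in> E P) \<and>
     (\<forall>i. Suc i < length ws \<longrightarrow>
        ends P (fst (ws!i)) (\<not> snd (ws!i)) = ends P (fst (ws!Suc i)) (snd (ws!Suc i))) \<and>
     ends P (fst (last ws)) (\<not> snd (last ws)) = ends P (fst (hd ws)) (snd (hd ws))"

definition walk_vertices :: "sposet \<Rightarrow> (nat \<times> bool) list \<Rightarrow> nat set" where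
  "walk_vertices P ws = {ends P e b | e b. e \<in> fst ` set ws}"

definition is_cycle :: "sposet \<Rightarrow> (nat \<times> bool) list \<Rightarrow> bool" where
  "is_cycle P ws \<longleftrightarrow> closed_walk P ws \<and>
     (\<forall>v\<in>walk_vertices P ws.
        (\<exists>e\<in>fst ` set ws. \<exists>b. ends P e b = v \<and> arr P e b) \<and>
        (\<exists>e\<in>fst ` set ws. \<exists>b. ends P e b = v \<and> \<not> arr P e b))"

definition signed_poset :: "sposet \<Rightarrow> bool" where
  "signed_poset P \<longleftrightarrow> is_orientation P \<and> (\<nexists>ws. is_cycle P ws)"

definition sinks :: "sposet \<Rightarrow> nat set" where
  "sinks P = {v \<in> V P. \<forall>e\<in>E P. \<forall>b. ends P e b = v \<longrightarrow> arr P e b}"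

definition proper_coloring :: "sposet \<Rightarrow> (nat \<Rightarrow> int) \<Rightarrow> bool" where
  "proper_coloring P \<kappa> \<longleftrightarrow>
     (\<forall>e\<in>E P. \<kappa> (ends P e True) \<noteq> sgnval P e * \<kappa> (ends P e False))"

definition preserves :: "sposet \<Rightarrow> (nat \<Rightarrow> int) \<Rightarrow> bool" where
  "preserves P \<kappa> \<longleftrightarrow>
     (\<forall>e\<in>E P. \<forall>b. arr P e b \<longleftrightarrow> \<kappa> (ends P e b) > sgnval P e * \<kappa> (ends P e (\<not> b)))"

text \<open>Formal power series in commuting variables x_i (i \<in> \<int>): coefficient functions on monomials,
  a monomial being a finite multiset of indices.\<close>
type_synonym fps_Z = "int multiset \<Rightarrow> rat"

definition Ypos :: "sposet \<Rightarrow> fps_Z" where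
  "Ypos P m = of_nat (card {\<kappa> \<in> V P \<rightarrow>\<^sub>E (UNIV :: int set).
       proper_coloring P \<kappa> \<and> preserves P \<kappa> \<and> image_mset \<kappa> (mset_set (V P)) = m})"

definition elem_sym :: "nat \<Rightarrow> fps_Z" where
  "elem_sym n m = (if size m = n \<and> (\<forall>i. count m i \<le> 1) then 1 else 0)"

definition represents :: "(rat \<times> sposet) list \<Rightarrow> fps_Z \<Rightarrow> bool" where
  "represents rs f \<longleftrightarrow> (\<forall>(c,P)\<in>set rs. signed_poset P) \<and>
     f = (\<lambda>m. (\<Sum>(c,P)\<leftarrow>rs. c * Ypos P m))"

definition phi :: "fps_Z \<Rightarrow> rat poly" where
  "phi f = (THE p. \<exists>rs. represents rs f \<and>
              p = (\<Sum>(c,P)\<leftarrow>rs. smult c (monom 1 (card (sinks P)))))"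

end

theory Submission
  imports Defs "HOL-Library.Nat_Bijection"
begin

text \<open>Call a proper colouring \<open>\<kappa>\<close> of a signed poset \<open>P\<close> canonical if the absolute values of its
  nonzero colours are exactly \<open>1, \<dots>, k\<close>, where \<open>k\<close> is its height. The vertices of colour \<open>k\<close> form a set
  \<open>B\<^sub>1\<close> of sinks, those of colour \<open>-k\<close> a set \<open>B\<^sub>2\<close> of sources, and removing them leaves a canonical
  colouring of height \<open>k - 1\<close>; conversely every disjoint pair \<open>(B\<^sub>1, B\<^sub>2) \<noteq> ({}, {})\<close> of sets of sinks
  and sources can be put on a new top level. Since a signed poset with an edge has a sink or a source on
  an edge (otherwise a closed walk using as many edges as possible is a cycle), its sinks and sources
  differ, and inclusion-exclusion over the pairs \<open>(B\<^sub>1, B\<^sub>2)\<close> gives by induction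
  \<open>\<Sum>\<^sub>\<kappa> (-1)\<^bsup>|V| + k\<^esup> = 1\<close> and \<open>\<Sum>\<^sub>\<kappa> (-1)\<^bsup>|V| + k\<^esup> [B\<^sub>2 = {}] (1 - t)\<^bsup>|B\<^sub>1|\<^esup> = 1 - t\<^bsup>sink(P)\<^esup>\<close>.
  Both summands only depend on the monomial of \<open>\<kappa>\<close>, so weighting the coefficients of the canonical
  monomials gives a linear functional that maps every \<open>Y\<^sub>P\<close> to \<open>t\<^bsup>sink(P)\<^esup>\<close>; hence it computes \<open>phi\<close>.
  Finally \<open>e\<^sub>n = Y\<^sub>P\<close> for the chain \<open>P\<close> on \<open>n\<close> vertices, which has a single sink.\<close>

section \<open>Sinks, sources and closed walks\<close>

definition sources :: "sposet \<Rightarrow> nat set" where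
  "sources P = {v \<in> V P. \<forall>e\<in>E P. \<forall>b. ends P e b = v \<longrightarrow> \<not> arr P e b}"

lemma sinks_subset_V: "sinks P \<subseteq> V P" and sources_subset_V: "sources P \<subseteq> V P"
  unfolding sinks_def sources_def by auto

lemma is_orientationD:
  assumes "is_orientation P"
  shows "finite (V P)" "finite (E P)" "e \<in> E P \<Longrightarrow> ends P e b \<in> V P"
    "e \<in> E P \<Longrightarrow> pos P e \<longleftrightarrow> arr P e True \<noteq> arr P e False"
  using assms unfolding is_orientation_def by auto

lemma signed_posetD: "signed_poset P \<Longrightarrow> is_orientation P" "signed_poset P \<Longrightarrow> \<not> is_cycle P ws"
  unfolding signed_poset_def by auto

lemma closed_walk_iff_successively:
  "closed_walk P ws \<longleftrightarrow> ws \<noteq> [] \<and> (\<forall>(e,b)\<in>set ws. e \<in> E P) \<and>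
     successively (\<lambda>x y. ends P (fst x) (\<not> snd x) = ends P (fst y) (snd y)) ws \<and>
     ends P (fst (last ws)) (\<not> snd (last ws)) = ends P (fst (hd ws)) (snd (hd ws))"
  unfolding closed_walk_def successively_conv_nth by blast

lemma closed_walk_edges: "closed_walk P ws \<Longrightarrow> fst ` set ws \<subseteq> E P"
  unfolding closed_walk_def by auto

lemma closed_walk_enters_vertex:
  assumes cw: "closed_walk P ws" and v: "v \<in> walk_vertices P ws"
  obtains i where "i < length ws" "ends P (fst (ws!i)) (\<not> snd (ws!i)) = v"
proof -
  from v obtain e b where eb: "e \<in> fst ` set ws" "v = ends P e b"
    unfolding walk_vertices_def by blast
  then obtain i where i: "i < length ws" "fst (ws!i) = e"
    by (metis fst_conv in_set_conv_nth imageE)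
  have ne: "ws \<noteq> []" using cw unfolding closed_walk_def by auto
  show ?thesis
  proof (cases "b = snd (ws!i)")
    case False
    then show ?thesis using i eb that by auto
  next
    case True
    \<comment> \<open>the walk enters the tail of step i at the previous step (cyclically)\<close>
    show ?thesis
    proof (cases i)
      case 0
      have "last ws = ws ! (length ws - 1)" "hd ws = ws ! 0"
        using ne by (auto simp: last_conv_nth hd_conv_nth)
      then show ?thesis using cw True i eb 0 ne that[of "length ws - 1"]
        unfolding closed_walk_def by auto
    next
      case (Suc j)
      then show ?thesis using cw True i eb that[of j] unfolding closed_walk_def by auto
    qed
  qed
qed

lemma closed_walk_insert_detour:
  assumes cw: "closed_walk P ws" and i: "i < length ws"
    and v: "ends P (fst (ws!i)) (\<not> snd (ws!i)) = v"
    and e: "e \<in> E P" and c: "ends P e c = v"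
  shows "closed_walk P (take (Suc i) ws @ [(e,c),(e,\<not>c)] @ drop (Suc i) ws)"
proof -
  define R where "R = (\<lambda>x y. ends P (fst x) (\<not> snd x) = ends P (fst y) (snd y))"
  define A where "A = take (Suc i) ws"
  define D where "D = drop (Suc i) ws"
  define X where "X = [(e,c),(e,\<not>c)]"
  have ne: "ws \<noteq> []" and sw: "successively R ws" and edges: "\<forall>(e,b)\<in>set ws. e \<in> E P"
    and cl: "ends P (fst (last ws)) (\<not> snd (last ws)) = ends P (fst (hd ws)) (snd (hd ws))"
    using cw unfolding closed_walk_iff_successively R_def by auto
  have ws: "ws = A @ D" unfolding A_def D_def by simp
  have sA: "successively R A" and sD: "successively R D"
    using sw ws by (metis successively_append_iff)+
  have lA: "last A = ws ! i" using i unfolding A_def by (simp add: take_Suc_conv_app_nth)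
  have Ane: "A \<noteq> []" and hA: "hd A = hd ws" using ne unfolding A_def by simp_all
  have jXD: "R (last X) (hd D)" if "D \<noteq> []"
  proof -
    have si: "Suc i < length ws" using that unfolding D_def by simp
    have "R (ws!i) (ws ! Suc i)" using sw si by (rule successively_nth)
    then show ?thesis using si v c unfolding R_def X_def D_def by (simp add: hd_drop_conv_nth)
  qed
  have "successively R (X @ D)"
    using sD jXD unfolding X_def R_def by (cases D) auto
  moreover have "R (last A) (hd (X @ D))" using lA v c unfolding R_def X_def by simp
  ultimately have sAll: "successively R (A @ X @ D)"
    using sA Ane by (simp add: successively_append_iff)
  have edges': "\<forall>(e',b)\<in>set (A @ X @ D). e' \<in> E P"
    using edges e unfolding ws X_def by auto
  have last': "ends P (fst (last (A @ X @ D))) (\<not> snd (last (A @ X @ D))) = ends P (fst (hd ws)) (snd (hd ws))"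
  proof (cases "D = []")
    case True
    then show ?thesis using cl v c lA ws unfolding X_def by simp
  next
    case False
    then show ?thesis using cl ws by simp
  qed
  show ?thesis
    unfolding closed_walk_iff_successively A_def[symmetric] D_def[symmetric] X_def[symmetric] R_def[symmetric]
    using sAll edges' last' Ane hA by simp
qed

text \<open>A missing edge could be inserted into the walk as a back-and-forth detour.\<close>
lemma maximal_closed_walk_contains_incident_edges:
  assumes cw: "closed_walk P ws" and fin: "finite (E P)"
    and mx: "\<And>ws'. closed_walk P ws' \<Longrightarrow> card (fst ` set ws') \<le> card (fst ` set ws)"
    and v: "v \<in> walk_vertices P ws" and e: "e \<in> E P" and c: "ends P e c = v"
  shows "e \<in> fst ` set ws"
proof (rule ccontr)
  assume ne: "e \<notin> fst ` set ws"
  obtain i where i: "i < length ws" "ends P (fst (ws!i)) (\<not> snd (ws!i)) = v"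
    using closed_walk_enters_vertex[OF cw v] by blast
  define ws' where "ws' = take (Suc i) ws @ [(e,c),(e,\<not>c)] @ drop (Suc i) ws"
  have "set ws = set (take (Suc i) ws) \<union> set (drop (Suc i) ws)"
    by (metis append_take_drop_id set_append)
  then have "fst ` set ws' = insert e (fst ` set ws)"
    unfolding ws'_def by auto
  then have "card (fst ` set ws') = Suc (card (fst ` set ws))" using ne by simp
  then show False using mx[OF closed_walk_insert_detour[OF cw i e c, folded ws'_def]] by simp
qed

lemma signed_poset_edge_at_sink_or_source:
  assumes sp: "signed_poset P" and e0: "e0 \<in> E P"
  shows "\<exists>e\<in>E P. \<exists>b. ends P e b \<in> sinks P \<union> sources P"
proof (rule ccontr)
  assume H: "\<not> ?thesis"
  have finE: "finite (E P)" using is_orientationD(2)[OF signed_posetD(1)[OF sp]] .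
  have w0: "closed_walk P [(e0,True),(e0,False)]"
    using e0 unfolding closed_walk_def by auto
  have "card (fst ` set ws) < Suc (card (E P))" if "closed_walk P ws" for ws
    using closed_walk_edges[OF that] finE by (simp add: card_mono le_imp_less_Suc)
  then obtain ws where cw: "closed_walk P ws"
    and mx: "\<And>ws'. closed_walk P ws' \<Longrightarrow> card (fst ` set ws') \<le> card (fst ` set ws)"
    using ex_has_greatest_nat[of "closed_walk P" _ "\<lambda>ws. card (fst ` set ws)", OF w0] by blast
  have "is_cycle P ws"
    unfolding is_cycle_def
  proof (intro conjI[OF cw] ballI)
    fix v assume v: "v \<in> walk_vertices P ws"
    then obtain e b where eb: "e \<in> fst ` set ws" "v = ends P e b"
      unfolding walk_vertices_def by blast
    have "e \<in> E P" using eb closed_walk_edges[OF cw] by auto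
    then have "v \<in> V P" "v \<notin> sinks P" "v \<notin> sources P"
      using H eb is_orientationD(3)[OF signed_posetD(1)[OF sp]] by auto
    then obtain e1 b1 e2 b2 where
      "e1 \<in> E P" "ends P e1 b1 = v" "\<not> arr P e1 b1" "e2 \<in> E P" "ends P e2 b2 = v" "arr P e2 b2"
      unfolding sinks_def sources_def by blast
    then show "(\<exists>e\<in>fst ` set ws. \<exists>b. ends P e b = v \<and> arr P e b) \<and>
        (\<exists>e\<in>fst ` set ws. \<exists>b. ends P e b = v \<and> \<not> arr P e b)"
      using maximal_closed_walk_contains_incident_edges[OF cw finE mx v] by blast
  qed
  then show False using signed_posetD(2)[OF sp] by blast
qed

lemma signed_poset_sinks_eq_sources_iff:
  assumes sp: "signed_poset P"
  shows "sinks P = sources P \<longleftrightarrow> E P = {}"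
proof
  assume "sinks P = sources P"
  show "E P = {}"
  proof (rule ccontr)
    assume "E P \<noteq> {}"
    then obtain e b where "e \<in> E P" "ends P e b \<in> sinks P \<union> sources P"
      using signed_poset_edge_at_sink_or_source[OF sp] by blast
    then show False using \<open>sinks P = sources P\<close> unfolding sinks_def sources_def by blast
  qed
qed (auto simp: sinks_def sources_def)

section \<open>Canonical colourings\<close>

definition induced :: "sposet \<Rightarrow> nat set \<Rightarrow> sposet" where
  "induced P R = P\<lparr>V := R, E := {e \<in> E P. \<forall>b. ends P e b \<in> R}\<rparr>"

lemma induced_simps [simp]: "V (induced P R) = R" "E (induced P R) = {e \<in> E P. \<forall>b. ends P e b \<in> R}"
  "ends (induced P R) = ends P" "arr (induced P R) = arr P" "pos (induced P R) = pos P"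
  by (simp_all add: induced_def)

lemma sgnval_induced [simp]: "sgnval (induced P R) = sgnval P"
  by (simp add: sgnval_def fun_eq_iff)

lemma signed_poset_induced:
  assumes sp: "signed_poset P" and R: "R \<subseteq> V P"
  shows "signed_poset (induced P R)"
proof -
  have "is_orientation (induced P R)"
    using signed_posetD(1)[OF sp] R unfolding is_orientation_def by (auto intro: finite_subset)
  moreover have "\<not> is_cycle (induced P R) ws" for ws
  proof
    assume "is_cycle (induced P R) ws"
    then have "is_cycle P ws"
      unfolding is_cycle_def closed_walk_def walk_vertices_def by auto
    then show False using signed_posetD(2)[OF sp] by blast
  qed
  ultimately show ?thesis unfolding signed_poset_def by blast
qed

lemma proper_preserving_iff:
  "proper_coloring P \<kappa> \<and> preserves P \<kappa> \<longleftrightarrow>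
  (\<forall>e\<in>E P. \<kappa> (ends P e True) \<noteq> sgnval P e * \<kappa> (ends P e False) \<and>
     (\<forall>b. arr P e b \<longleftrightarrow> \<kappa> (ends P e b) > sgnval P e * \<kappa> (ends P e (\<not> b))))"
  unfolding proper_coloring_def preserves_def by blast

lemma proper_preserving_induced:
  assumes "proper_coloring P \<kappa>" "preserves P \<kappa>"
  shows "proper_coloring (induced P R) (restrict \<kappa> R)" "preserves (induced P R) (restrict \<kappa> R)"
  using assms unfolding proper_coloring_def preserves_def by auto

definition height :: "'a set \<Rightarrow> ('a \<Rightarrow> int) \<Rightarrow> int" where
  "height W \<kappa> = Max (insert 0 ((\<lambda>v. \<bar>\<kappa> v\<bar>) ` W))"

definition canonical :: "'a set \<Rightarrow> ('a \<Rightarrow> int) \<Rightarrow> bool" where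
  "canonical W \<kappa> \<longleftrightarrow> (\<lambda>v. \<bar>\<kappa> v\<bar>) ` W - {0} = {1..height W \<kappa>}"

definition canonical_colorings :: "sposet \<Rightarrow> (nat \<Rightarrow> int) set" where
  "canonical_colorings P = {\<kappa> \<in> V P \<rightarrow>\<^sub>E (UNIV :: int set).
     proper_coloring P \<kappa> \<and> preserves P \<kappa> \<and> canonical (V P) \<kappa>}"

lemma abs_le_height: "finite W \<Longrightarrow> v \<in> W \<Longrightarrow> \<bar>\<kappa> v\<bar> \<le> height W \<kappa>"
  unfolding height_def by (rule Max_ge) auto

lemma height_nonneg: "finite W \<Longrightarrow> 0 \<le> height W \<kappa>"
  unfolding height_def by (rule Max_ge) auto

lemma height_attained:
  assumes "finite W" "height W \<kappa> > 0"
  obtains v where "v \<in> W" "\<bar>\<kappa> v\<bar> = height W \<kappa>"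
proof -
  have "height W \<kappa> \<in> insert 0 ((\<lambda>v. \<bar>\<kappa> v\<bar>) ` W)"
    unfolding height_def using assms(1) by (intro Max_in) auto
  then show ?thesis using assms(2) that by auto
qed

lemma height_eqI:
  assumes "finite W" "(\<lambda>v. \<bar>\<kappa> v\<bar>) ` W \<subseteq> {0..k}" "k \<in> insert 0 ((\<lambda>v. \<bar>\<kappa> v\<bar>) ` W)"
  shows "height W \<kappa> = k"
  unfolding height_def using assms by (intro Max_eqI) auto

lemma height_image: "height (f ` W) \<kappa> = height W (\<kappa> \<circ> f)"
  and canonical_image: "canonical (f ` W) \<kappa> \<longleftrightarrow> canonical W (\<kappa> \<circ> f)"
  unfolding height_def canonical_def by (simp_all add: image_image)

lemma height_le_card:
  assumes "finite W" "canonical W \<kappa>"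
  shows "height W \<kappa> \<le> int (card W)"
proof -
  have "card {1..height W \<kappa>} \<le> card W"
    using assms unfolding canonical_def
    by (metis Diff_subset card_image_le card_mono finite_imageI order_trans)
  then show ?thesis by simp
qed

lemma finite_canonical_colorings:
  assumes fin: "finite (V P)"
  shows "finite (canonical_colorings P)"
proof -
  let ?n = "int (card (V P))"
  have "canonical_colorings P \<subseteq> V P \<rightarrow>\<^sub>E {-?n..?n}"
  proof
    fix \<kappa> assume "\<kappa> \<in> canonical_colorings P"
    then have c: "canonical (V P) \<kappa>" and \<kappa>: "\<kappa> \<in> V P \<rightarrow>\<^sub>E UNIV"
      unfolding canonical_colorings_def by auto
    have "\<bar>\<kappa> v\<bar> \<le> ?n" if "v \<in> V P" for v
      using abs_le_height[OF fin that, of \<kappa>] height_le_card[OF fin c] by linarith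
    then show "\<kappa> \<in> V P \<rightarrow>\<^sub>E {-?n..?n}" using \<kappa> by (force simp: PiE_def Pi_def abs_le_iff)
  qed
  moreover have "finite (V P \<rightarrow>\<^sub>E {-?n..?n})" using fin by (intro finite_PiE) auto
  ultimately show ?thesis by (rule finite_subset)
qed

definition zero_coloring :: "sposet \<Rightarrow> nat \<Rightarrow> int" where
  "zero_coloring P = restrict (\<lambda>_. 0) (V P)"

lemma canonical_colorings_height_zero:
  assumes ori: "is_orientation P"
  shows "{\<kappa> \<in> canonical_colorings P. height (V P) \<kappa> = 0} = (if E P = {} then {zero_coloring P} else {})"
proof -
  note finV = is_orientationD(1)[OF ori]
  have zero: "\<kappa> = zero_coloring P" "E P = {}"
    if \<kappa>: "\<kappa> \<in> canonical_colorings P" and h: "height (V P) \<kappa> = 0" for \<kappa>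
  proof -
    have \<kappa>E: "\<kappa> \<in> V P \<rightarrow>\<^sub>E UNIV" and pc: "proper_coloring P \<kappa>"
      using \<kappa> unfolding canonical_colorings_def by auto
    have z: "\<kappa> v = 0" if "v \<in> V P" for v using abs_le_height[OF finV that, of \<kappa>] h by simp
    show "\<kappa> = zero_coloring P"
      using z PiE_arb[OF \<kappa>E] unfolding zero_coloring_def by (auto simp: fun_eq_iff)
    show "E P = {}"
      using pc z is_orientationD(3)[OF ori] unfolding proper_coloring_def by fastforce
  qed
  have "zero_coloring P \<in> canonical_colorings P" "height (V P) (zero_coloring P) = 0" if "E P = {}"
  proof -
    show h: "height (V P) (zero_coloring P) = 0"
      using finV by (intro height_eqI) (auto simp: zero_coloring_def)
    have "canonical (V P) (zero_coloring P)"
      unfolding canonical_def h by (auto simp: zero_coloring_def)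
    then show "zero_coloring P \<in> canonical_colorings P"
      using that unfolding canonical_colorings_def proper_coloring_def preserves_def
      by (auto simp: zero_coloring_def)
  qed
  then show ?thesis using zero by auto
qed

definition top_level :: "sposet \<Rightarrow> (nat \<Rightarrow> int) \<Rightarrow> nat set" where
  "top_level P \<kappa> = {v \<in> V P. \<kappa> v = height (V P) \<kappa>}"

definition bottom_level :: "sposet \<Rightarrow> (nat \<Rightarrow> int) \<Rightarrow> nat set" where
  "bottom_level P \<kappa> = {v \<in> V P. \<kappa> v = - height (V P) \<kappa>}"

definition extremal_pairs :: "sposet \<Rightarrow> (nat set \<times> nat set) set" where
  "extremal_pairs P = {(B1, B2). B1 \<subseteq> sinks P \<and> B2 \<subseteq> sources P \<and> B1 \<inter> B2 = {} \<and> B1 \<union> B2 \<noteq> {}}"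

definition add_levels :: "sposet \<Rightarrow> nat set \<Rightarrow> nat set \<Rightarrow> (nat \<Rightarrow> int) \<Rightarrow> nat \<Rightarrow> int" where
  "add_levels P B1 B2 \<kappa> = (let k = height (V P - B1 - B2) \<kappa> + 1 in
     restrict (\<lambda>v. if v \<in> B1 then k else if v \<in> B2 then - k else \<kappa> v) (V P))"

lemma extremal_pairsD:
  assumes "(B1, B2) \<in> extremal_pairs P"
  shows "B1 \<subseteq> sinks P" "B2 \<subseteq> sources P" "B1 \<inter> B2 = {}" "B1 \<union> B2 \<noteq> {}"
    "B1 \<subseteq> V P" "B2 \<subseteq> V P"
  using assms sinks_subset_V[of P] sources_subset_V[of P] unfolding extremal_pairs_def by auto

lemma finite_extremal_pairs: "finite (V P) \<Longrightarrow> finite (extremal_pairs P)"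
  by (rule finite_subset[of _ "Pow (V P) \<times> Pow (V P)"]) (auto dest: extremal_pairsD)

lemma extremal_pairs_card:
  assumes fin: "finite (V P)" and p: "(B1, B2) \<in> extremal_pairs P"
  shows "card (V P) = card (V P - B1 - B2) + card B1 + card B2" "card (V P - B1 - B2) < card (V P)"
proof -
  note B = extremal_pairsD(5,6,3,4)[OF p]
  then have fB: "finite B1" "finite B2" using fin by (auto intro: finite_subset)
  have "card (B1 \<union> B2) = card B1 + card B2" using fB B(3) by (rule card_Un_disjoint)
  moreover have "card (V P - (B1 \<union> B2)) = card (V P) - card (B1 \<union> B2)"
    using B fB by (intro card_Diff_subset) auto
  moreover have "card (B1 \<union> B2) \<le> card (V P)" using B fin by (intro card_mono) auto
  moreover have "V P - B1 - B2 = V P - (B1 \<union> B2)" by auto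
  ultimately show c: "card (V P) = card (V P - B1 - B2) + card B1 + card B2" by simp
  have "card B1 + card B2 > 0" using B(4) fB by auto
  then show "card (V P - B1 - B2) < card (V P)" using c by simp
qed

text \<open>The edge condition for an edge of sign \<open>s\<close> with end colours \<open>a, c\<close> and arrows \<open>x, y\<close>, when one
  end lies on the new level \<open>\<pm>k\<close> (a sink at \<open>k\<close>, a source at \<open>-k\<close>) and the other below it.\<close>
lemma edge_condition_at_extreme_level:
  fixes a c k s :: int and p x y :: bool
  assumes k1: "k \<ge> 1" and s: "s = 1 \<and> p \<or> s = -1 \<and> \<not> p" and o: "p \<longleftrightarrow> x \<noteq> y"
    and A: "a = k \<and> x \<or> a = -k \<and> \<not> x \<or> \<bar>a\<bar> \<le> k - 1"
    and C: "c = k \<and> y \<or> c = -k \<and> \<not> y \<or> \<bar>c\<bar> \<le> k - 1"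
    and N: "\<not> (\<bar>a\<bar> \<le> k - 1 \<and> \<bar>c\<bar> \<le> k - 1)"
  shows "a \<noteq> s * c \<and> (x \<longleftrightarrow> a > s * c) \<and> (y \<longleftrightarrow> c > s * a)"
  using s o A C N k1 by (elim disjE conjE; simp add: abs_le_iff; arith?)

lemma sgnval_cases: "sgnval P e = 1 \<and> pos P e \<or> sgnval P e = -1 \<and> \<not> pos P e"
  unfolding sgnval_def by auto

context
  fixes P B1 B2 \<kappa>
  assumes ori: "is_orientation P" and pair: "(B1, B2) \<in> extremal_pairs P"
    and \<kappa>: "\<kappa> \<in> canonical_colorings (induced P (V P - B1 - B2))"
begin

private lemmas pair_facts = extremal_pairsD[OF pair]

private lemma finite_rest: "finite (V P - B1 - B2)"
  using is_orientationD(1)[OF ori] by simp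

private lemma rest_bound: "v \<in> V P \<Longrightarrow> v \<notin> B1 \<Longrightarrow> v \<notin> B2 \<Longrightarrow> \<bar>\<kappa> v\<bar> \<le> height (V P - B1 - B2) \<kappa>"
  by (rule abs_le_height[OF finite_rest]) simp

private lemma height_rest_nonneg: "0 \<le> height (V P - B1 - B2) \<kappa>"
  by (rule height_nonneg[OF finite_rest])

private lemma add_levels_top [simp]: "v \<in> B1 \<Longrightarrow> add_levels P B1 B2 \<kappa> v = height (V P - B1 - B2) \<kappa> + 1"
  and add_levels_bottom [simp]: "v \<in> B2 \<Longrightarrow> add_levels P B1 B2 \<kappa> v = - (height (V P - B1 - B2) \<kappa> + 1)"
  and add_levels_rest [simp]: "v \<in> V P \<Longrightarrow> v \<notin> B1 \<Longrightarrow> v \<notin> B2 \<Longrightarrow> add_levels P B1 B2 \<kappa> v = \<kappa> v"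
  using pair_facts unfolding add_levels_def Let_def by auto

lemma proper_preserving_add_levels:
  "proper_coloring P (add_levels P B1 B2 \<kappa>) \<and> preserves P (add_levels P B1 B2 \<kappa>)"
  unfolding proper_preserving_iff
proof
  let ?\<mu> = "add_levels P B1 B2 \<kappa>"
  fix e assume e: "e \<in> E P"
  define k where "k = height (V P - B1 - B2) \<kappa> + 1"
  have k1: "k \<ge> 1" using height_rest_nonneg unfolding k_def by simp
  have ends: "ends P e b \<in> V P" for b using is_orientationD(3)[OF ori e] .
  show "?\<mu> (ends P e True) \<noteq> sgnval P e * ?\<mu> (ends P e False) \<and>
     (\<forall>b. arr P e b \<longleftrightarrow> ?\<mu> (ends P e b) > sgnval P e * ?\<mu> (ends P e (\<not> b)))"
  proof (cases "\<forall>b. ends P e b \<notin> B1 \<union> B2")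
    case True
    then have "e \<in> E (induced P (V P - B1 - B2))" using e ends by auto
    moreover have "?\<mu> (ends P e b) = \<kappa> (ends P e b)" for b
      using True ends by simp
    ultimately show ?thesis
      using \<kappa> proper_preserving_iff[of "induced P (V P - B1 - B2)" \<kappa>]
      unfolding canonical_colorings_def by auto
  next
    case False
    have level: "?\<mu> (ends P e b) = k \<and> arr P e b \<or> ?\<mu> (ends P e b) = -k \<and> \<not> arr P e b \<or>
       \<bar>?\<mu> (ends P e b)\<bar> \<le> k - 1" for b
      using pair_facts(1,2) rest_bound[OF ends[of b]] ends[of b] e
      unfolding sinks_def sources_def k_def by (cases "ends P e b \<in> B1 \<union> B2") auto
    from False obtain b where "ends P e b \<in> B1 \<union> B2" by blast
    then have "\<bar>?\<mu> (ends P e b)\<bar> = k" using k1 unfolding k_def by auto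
    then have "\<not> (\<bar>?\<mu> (ends P e True)\<bar> \<le> k - 1 \<and> \<bar>?\<mu> (ends P e False)\<bar> \<le> k - 1)"
      by (cases b) auto
    from edge_condition_at_extreme_level[OF k1 sgnval_cases is_orientationD(4)[OF ori e]
        level[of True] level[of False] this]
    show ?thesis unfolding all_bool_eq by auto
  qed
qed

private lemma abs_add_levels_image:
  "(\<lambda>v. \<bar>add_levels P B1 B2 \<kappa> v\<bar>) ` V P
     = insert (height (V P - B1 - B2) \<kappa> + 1) ((\<lambda>v. \<bar>\<kappa> v\<bar>) ` (V P - B1 - B2))"
proof -
  have V: "V P = (B1 \<union> B2) \<union> (V P - B1 - B2)" using pair_facts by auto
  have "(\<lambda>v. \<bar>add_levels P B1 B2 \<kappa> v\<bar>) ` (B1 \<union> B2) = {height (V P - B1 - B2) \<kappa> + 1}"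
    using pair_facts(3,4) height_rest_nonneg by (force simp: image_constant_conv)
  moreover have "(\<lambda>v. \<bar>add_levels P B1 B2 \<kappa> v\<bar>) ` (V P - B1 - B2) = (\<lambda>v. \<bar>\<kappa> v\<bar>) ` (V P - B1 - B2)"
    by (intro image_cong) auto
  ultimately show ?thesis by (subst V) (simp add: image_Un)
qed

lemma height_add_levels: "height (V P) (add_levels P B1 B2 \<kappa>) = height (V P - B1 - B2) \<kappa> + 1"
proof (rule height_eqI)
  have "\<bar>\<kappa> v\<bar> \<le> height (V P - B1 - B2) \<kappa> + 1" if "v \<in> V P - B1 - B2" for v
    using rest_bound that by force
  then show "(\<lambda>v. \<bar>add_levels P B1 B2 \<kappa> v\<bar>) ` V P \<subseteq> {0..height (V P - B1 - B2) \<kappa> + 1}"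
    using height_rest_nonneg unfolding abs_add_levels_image by auto
qed (use is_orientationD(1)[OF ori] abs_add_levels_image in auto)

lemma add_levels_in_canonical_colorings: "add_levels P B1 B2 \<kappa> \<in> canonical_colorings P"
proof -
  let ?h = "height (V P - B1 - B2) \<kappa>"
  have "(\<lambda>v. \<bar>\<kappa> v\<bar>) ` (V P - B1 - B2) - {0} = {1..?h}"
    using \<kappa> unfolding canonical_colorings_def canonical_def by simp
  then have "insert (?h + 1) ((\<lambda>v. \<bar>\<kappa> v\<bar>) ` (V P - B1 - B2)) - {0} = insert (?h + 1) {1..?h}"
    using height_rest_nonneg by auto
  also have "\<dots> = {1..?h + 1}"
    using height_rest_nonneg atLeastAtMostPlus1_int_conv[of 1 ?h] by (simp add: add.commute)
  finally have "canonical (V P) (add_levels P B1 B2 \<kappa>)"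
    unfolding canonical_def height_add_levels abs_add_levels_image .
  then show ?thesis
    using proper_preserving_add_levels unfolding canonical_colorings_def add_levels_def Let_def
    by simp
qed

lemma levels_add_levels:
  "top_level P (add_levels P B1 B2 \<kappa>) = B1" "bottom_level P (add_levels P B1 B2 \<kappa>) = B2"
proof -
  let ?k = "height (V P - B1 - B2) \<kappa> + 1"
  have top: "v \<in> B1 \<longleftrightarrow> add_levels P B1 B2 \<kappa> v = ?k" if "v \<in> V P" for v
    using rest_bound[OF that] height_rest_nonneg add_levels_rest[OF that] pair_facts(3)
    by (cases "v \<in> B1"; cases "v \<in> B2") auto
  have bottom: "v \<in> B2 \<longleftrightarrow> add_levels P B1 B2 \<kappa> v = - ?k" if "v \<in> V P" for v
    using rest_bound[OF that] height_rest_nonneg add_levels_rest[OF that] pair_facts(3)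
    by (cases "v \<in> B1"; cases "v \<in> B2") auto
  show "top_level P (add_levels P B1 B2 \<kappa>) = B1"
    unfolding top_level_def height_add_levels using top pair_facts(5) by blast
  show "bottom_level P (add_levels P B1 B2 \<kappa>) = B2"
    unfolding bottom_level_def height_add_levels using bottom pair_facts(6) by blast
qed

lemma restrict_add_levels: "restrict (add_levels P B1 B2 \<kappa>) (V P - B1 - B2) = \<kappa>"
proof
  fix v
  show "restrict (add_levels P B1 B2 \<kappa>) (V P - B1 - B2) v = \<kappa> v"
  proof (cases "v \<in> V P - B1 - B2")
    case False
    have "\<kappa> \<in> V P - B1 - B2 \<rightarrow>\<^sub>E UNIV" using \<kappa> unfolding canonical_colorings_def by simp
    from PiE_arb[OF this False] False show ?thesis by simp
  qed simp
qed

end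

lemma image_Collect_neq: "f ` {x \<in> A. f x \<noteq> c} = f ` A - {c}"
  by auto

context
  fixes P \<kappa>
  assumes ori: "is_orientation P" and \<kappa>: "\<kappa> \<in> canonical_colorings P"
    and pos: "0 < height (V P) \<kappa>"
begin

private lemma bound: "v \<in> V P \<Longrightarrow> \<bar>\<kappa> v\<bar> \<le> height (V P) \<kappa>"
  by (rule abs_le_height[OF is_orientationD(1)[OF ori]])

private lemma edge_condition:
  assumes e: "e \<in> E P"
  shows "arr P e b \<longleftrightarrow> \<kappa> (ends P e b) > sgnval P e * \<kappa> (ends P e (\<not> b))"
    "sgnval P e * \<kappa> (ends P e (\<not> b)) \<noteq> \<kappa> (ends P e b)"
    "\<bar>sgnval P e * \<kappa> (ends P e (\<not> b))\<bar> \<le> height (V P) \<kappa>"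
proof -
  have pp: "\<kappa> (ends P e True) \<noteq> sgnval P e * \<kappa> (ends P e False)"
    "\<forall>b. arr P e b \<longleftrightarrow> \<kappa> (ends P e b) > sgnval P e * \<kappa> (ends P e (\<not> b))"
    using \<kappa> e proper_preserving_iff[of P \<kappa>] unfolding canonical_colorings_def by blast+
  then show "arr P e b \<longleftrightarrow> \<kappa> (ends P e b) > sgnval P e * \<kappa> (ends P e (\<not> b))" by blast
  show "sgnval P e * \<kappa> (ends P e (\<not> b)) \<noteq> \<kappa> (ends P e b)"
    using pp(1) sgnval_cases[of P e] by (cases b) auto
  show "\<bar>sgnval P e * \<kappa> (ends P e (\<not> b))\<bar> \<le> height (V P) \<kappa>"
    using bound[OF is_orientationD(3)[OF ori e]] sgnval_cases[of P e] by (auto simp: abs_mult)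
qed

lemma top_level_subset_sinks: "top_level P \<kappa> \<subseteq> sinks P"
proof
  fix v assume "v \<in> top_level P \<kappa>"
  then have v: "v \<in> V P" "\<kappa> v = height (V P) \<kappa>" unfolding top_level_def by auto
  have "arr P e b" if "e \<in> E P" "ends P e b = v" for e b
    using edge_condition[OF that(1), of b] v that(2) by (simp add: abs_le_iff)
  then show "v \<in> sinks P" using v unfolding sinks_def by auto
qed

lemma bottom_level_subset_sources: "bottom_level P \<kappa> \<subseteq> sources P"
proof
  fix v assume "v \<in> bottom_level P \<kappa>"
  then have v: "v \<in> V P" "\<kappa> v = - height (V P) \<kappa>" unfolding bottom_level_def by auto
  have "\<not> arr P e b" if "e \<in> E P" "ends P e b = v" for e b
    using edge_condition[OF that(1), of b] v that(2) by (simp add: abs_le_iff)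
  then show "v \<in> sources P" using v unfolding sources_def by auto
qed

lemma levels_in_extremal_pairs: "(top_level P \<kappa>, bottom_level P \<kappa>) \<in> extremal_pairs P"
proof -
  obtain w where w: "w \<in> V P" "\<bar>\<kappa> w\<bar> = height (V P) \<kappa>"
    using height_attained[OF is_orientationD(1)[OF ori] pos] .
  then have "\<kappa> w = height (V P) \<kappa> \<or> \<kappa> w = - height (V P) \<kappa>" by arith
  then have "top_level P \<kappa> \<union> bottom_level P \<kappa> \<noteq> {}"
    using w(1) unfolding top_level_def bottom_level_def by blast
  moreover have "top_level P \<kappa> \<inter> bottom_level P \<kappa> = {}"
    using pos unfolding top_level_def bottom_level_def by auto
  ultimately show ?thesis
    using top_level_subset_sinks bottom_level_subset_sources unfolding extremal_pairs_def by blast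
qed

private lemma below_levels:
  "V P - top_level P \<kappa> - bottom_level P \<kappa> = {v \<in> V P. \<bar>\<kappa> v\<bar> \<noteq> height (V P) \<kappa>}"
  using pos unfolding top_level_def bottom_level_def by (auto simp: abs_if)

private lemma abs_image_below_levels:
  "(\<lambda>v. \<bar>\<kappa> v\<bar>) ` (V P - top_level P \<kappa> - bottom_level P \<kappa>) - {0} = {1..height (V P) \<kappa> - 1}"
proof -
  have "(\<lambda>v. \<bar>\<kappa> v\<bar>) ` (V P - top_level P \<kappa> - bottom_level P \<kappa>) - {0}
      = (\<lambda>v. \<bar>\<kappa> v\<bar>) ` V P - {0} - {height (V P) \<kappa>}"
    unfolding below_levels image_Collect_neq by (simp only: Diff_insert[symmetric] insert_commute)
  also have "\<dots> = {1..height (V P) \<kappa>} - {height (V P) \<kappa>}"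
    using \<kappa> unfolding canonical_colorings_def canonical_def by simp
  also have "\<dots> = {1..height (V P) \<kappa> - 1}"
    by (intro set_eqI) auto
  finally show ?thesis .
qed

private lemma height_below_levels:
  "height (V P - top_level P \<kappa> - bottom_level P \<kappa>) (restrict \<kappa> (V P - top_level P \<kappa> - bottom_level P \<kappa>))
     = height (V P) \<kappa> - 1"
proof (rule height_eqI)
  show "finite (V P - top_level P \<kappa> - bottom_level P \<kappa>)" using is_orientationD(1)[OF ori] by simp
  show "(\<lambda>v. \<bar>restrict \<kappa> (V P - top_level P \<kappa> - bottom_level P \<kappa>) v\<bar>) ` (V P - top_level P \<kappa> - bottom_level P \<kappa>)
      \<subseteq> {0..height (V P) \<kappa> - 1}"
  proof -
    have "\<bar>\<kappa> v\<bar> \<le> height (V P) \<kappa> - 1" if "v \<in> V P" "\<bar>\<kappa> v\<bar> \<noteq> height (V P) \<kappa>" for v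
      using bound[OF that(1)] that(2) by simp
    then show ?thesis unfolding below_levels by auto
  qed
  show "height (V P) \<kappa> - 1 \<in> insert 0 ((\<lambda>v. \<bar>restrict \<kappa> (V P - top_level P \<kappa> - bottom_level P \<kappa>) v\<bar>) `
      (V P - top_level P \<kappa> - bottom_level P \<kappa>))"
  proof (cases "height (V P) \<kappa> = 1")
    case False
    then have "height (V P) \<kappa> - 1 \<in> {1..height (V P) \<kappa> - 1}" using pos by simp
    then have "height (V P) \<kappa> - 1 \<in> (\<lambda>v. \<bar>\<kappa> v\<bar>) ` (V P - top_level P \<kappa> - bottom_level P \<kappa>)"
      unfolding abs_image_below_levels[symmetric] by blast
    then show ?thesis by (simp add: image_def)
  qed simp
qed

lemma restrict_below_levels_in_canonical_colorings:
  "restrict \<kappa> (V P - top_level P \<kappa> - bottom_level P \<kappa>)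
     \<in> canonical_colorings (induced P (V P - top_level P \<kappa> - bottom_level P \<kappa>))"
proof -
  have "canonical (V P - top_level P \<kappa> - bottom_level P \<kappa>) (restrict \<kappa> (V P - top_level P \<kappa> - bottom_level P \<kappa>))"
    using abs_image_below_levels unfolding canonical_def height_below_levels by simp
  then show ?thesis
    using \<kappa> proper_preserving_induced unfolding canonical_colorings_def by auto
qed

lemma add_levels_restrict_below_levels:
  "add_levels P (top_level P \<kappa>) (bottom_level P \<kappa>) (restrict \<kappa> (V P - top_level P \<kappa> - bottom_level P \<kappa>)) = \<kappa>"
proof
  fix v
  show "add_levels P (top_level P \<kappa>) (bottom_level P \<kappa>) (restrict \<kappa> (V P - top_level P \<kappa> - bottom_level P \<kappa>)) v = \<kappa> v"
  proof (cases "v \<in> V P")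
    case True
    then show ?thesis
      unfolding add_levels_def Let_def height_below_levels
      by (simp add: top_level_def bottom_level_def)
  next
    case False
    have "\<kappa> \<in> V P \<rightarrow>\<^sub>E UNIV" using \<kappa> unfolding canonical_colorings_def by blast
    from PiE_arb[OF this False] have "\<kappa> v = undefined" .
    then show ?thesis using False by (simp add: add_levels_def Let_def)
  qed
qed

end

lemma bij_betw_add_levels:
  assumes ori: "is_orientation P"
  shows "bij_betw (\<lambda>((B1, B2), \<kappa>). add_levels P B1 B2 \<kappa>)
    (SIGMA (B1, B2):extremal_pairs P. canonical_colorings (induced P (V P - B1 - B2)))
    {\<kappa> \<in> canonical_colorings P. 0 < height (V P) \<kappa>}"
proof -
  have peel: "add_levels P B1 B2 \<kappa> \<in> canonical_colorings P \<and> 0 < height (V P) (add_levels P B1 B2 \<kappa>) \<and>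
      top_level P (add_levels P B1 B2 \<kappa>) = B1 \<and> bottom_level P (add_levels P B1 B2 \<kappa>) = B2 \<and>
      restrict (add_levels P B1 B2 \<kappa>) (V P - B1 - B2) = \<kappa>"
    if "(B1, B2) \<in> extremal_pairs P" "\<kappa> \<in> canonical_colorings (induced P (V P - B1 - B2))" for B1 B2 \<kappa>
  proof -
    have "0 \<le> height (V P - B1 - B2) \<kappa>"
      using is_orientationD(1)[OF ori] by (intro height_nonneg) simp
    then show ?thesis
      using add_levels_in_canonical_colorings[OF ori that] height_add_levels[OF ori that]
        levels_add_levels[OF ori that] restrict_add_levels[OF ori that] by simp
  qed
  have build: "(top_level P \<kappa>, bottom_level P \<kappa>) \<in> extremal_pairs P \<and>
      restrict \<kappa> (V P - top_level P \<kappa> - bottom_level P \<kappa>)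
        \<in> canonical_colorings (induced P (V P - top_level P \<kappa> - bottom_level P \<kappa>)) \<and>
      add_levels P (top_level P \<kappa>) (bottom_level P \<kappa>) (restrict \<kappa> (V P - top_level P \<kappa> - bottom_level P \<kappa>)) = \<kappa>"
    if "\<kappa> \<in> canonical_colorings P" "0 < height (V P) \<kappa>" for \<kappa>
    using levels_in_extremal_pairs[OF ori that] restrict_below_levels_in_canonical_colorings[OF ori that]
      add_levels_restrict_below_levels[OF ori that] by simp
  show ?thesis
    by (rule bij_betw_byWitness[where f' = "\<lambda>\<kappa>. ((top_level P \<kappa>, bottom_level P \<kappa>),
        restrict \<kappa> (V P - top_level P \<kappa> - bottom_level P \<kappa>))"]) (use peel build in fastforce)+
qed

lemma sum_canonical_colorings:
  assumes ori: "is_orientation P"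
  shows "(\<Sum>\<kappa>\<in>canonical_colorings P. g \<kappa>) = (if E P = {} then g (zero_coloring P) else 0) +
    (\<Sum>(B1, B2)\<in>extremal_pairs P. \<Sum>\<kappa>\<in>canonical_colorings (induced P (V P - B1 - B2)).
       g (add_levels P B1 B2 \<kappa>))"
proof -
  note finV = is_orientationD(1)[OF ori]
  have "canonical_colorings P = {\<kappa> \<in> canonical_colorings P. height (V P) \<kappa> = 0}
      \<union> {\<kappa> \<in> canonical_colorings P. 0 < height (V P) \<kappa>}"
    using height_nonneg[OF finV] by (auto simp: le_less)
  then have "(\<Sum>\<kappa>\<in>canonical_colorings P. g \<kappa>)
      = (\<Sum>\<kappa>\<in>{\<kappa> \<in> canonical_colorings P. height (V P) \<kappa> = 0}. g \<kappa>)
      + (\<Sum>\<kappa>\<in>{\<kappa> \<in> canonical_colorings P. 0 < height (V P) \<kappa>}. g \<kappa>)"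
    using finite_canonical_colorings[OF finV]
    by (subst (1) \<open>canonical_colorings P = _\<close>, intro sum.union_disjoint) auto
  also have "(\<Sum>\<kappa>\<in>{\<kappa> \<in> canonical_colorings P. height (V P) \<kappa> = 0}. g \<kappa>)
      = (if E P = {} then g (zero_coloring P) else 0)"
    unfolding canonical_colorings_height_zero[OF ori] by simp
  also have "(\<Sum>\<kappa>\<in>{\<kappa> \<in> canonical_colorings P. 0 < height (V P) \<kappa>}. g \<kappa>)
      = (\<Sum>((B1, B2), \<kappa>)\<in>(SIGMA (B1, B2):extremal_pairs P. canonical_colorings (induced P (V P - B1 - B2))).
          g (add_levels P B1 B2 \<kappa>))"
    by (subst sum.reindex_bij_betw[OF bij_betw_add_levels[OF ori], symmetric])
      (simp add: case_prod_beta')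
  also have "\<dots> = (\<Sum>(B1, B2)\<in>extremal_pairs P. \<Sum>\<kappa>\<in>canonical_colorings (induced P (V P - B1 - B2)).
       g (add_levels P B1 B2 \<kappa>))"
    using finite_extremal_pairs[OF finV] finite_canonical_colorings finV
    by (simp add: case_prod_beta' sum.Sigma)
  finally show ?thesis .
qed

section \<open>Two signed counts of canonical colourings\<close>

lemma sum_power_card_Pow:
  fixes x :: "'a::comm_semiring_1"
  assumes "finite A"
  shows "(\<Sum>B\<in>Pow A. x ^ card B) = (1 + x) ^ card A"
  using prod_add[OF assms, of "\<lambda>_. x" "\<lambda>_. 1"] by (simp add: add.commute)

lemma sum_sign_supersets:
  assumes S: "finite S"
  shows "(\<Sum>B | B \<subseteq> S \<and> T \<subseteq> B. (-1::'a::comm_ring_1) ^ card B) = (if S = T then (-1) ^ card S else 0)"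
proof (cases "T \<subseteq> S")
  case True
  have T: "finite T" using S True by (rule finite_subset[rotated])
  have "{B. B \<subseteq> S \<and> T \<subseteq> B} = (\<lambda>C. T \<union> C) ` Pow (S - T)"
    using True by (auto intro!: image_eqI[where x = "_ - T"])
  moreover have "inj_on (\<lambda>C. T \<union> C) (Pow (S - T))"
    by (rule inj_onI) blast
  moreover have "card (T \<union> C) = card T + card C" if "C \<in> Pow (S - T)" for C
    using that T S by (intro card_Un_disjoint) (auto intro: finite_subset)
  ultimately have "(\<Sum>B | B \<subseteq> S \<and> T \<subseteq> B. (-1::'a) ^ card B) = (-1) ^ card T * (\<Sum>C\<in>Pow (S - T). (-1) ^ card C)"
    by (simp add: sum.reindex power_add sum_distrib_left)
  also have "\<dots> = (-1) ^ card T * 0 ^ card (S - T)"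
    using S by (simp add: sum_power_card_Pow)
  also have "\<dots> = (if S = T then (-1) ^ card S else 0)"
    using True S by (auto simp: power_0_left)
  finally show ?thesis .
next
  case False
  have empty: "{B. B \<subseteq> S \<and> T \<subseteq> B} = {}" and "S \<noteq> T" using False by blast+
  then show ?thesis unfolding empty by simp
qed

lemma sum_sign_disjoint_subsets:
  assumes S: "finite S" and T: "finite T"
  shows "(\<Sum>(B1, B2) | B1 \<subseteq> S \<and> B2 \<subseteq> T \<and> B1 \<inter> B2 = {}. (-1::'a::comm_ring_1) ^ (card B1 + card B2))
    = (if S = T then (-1) ^ card S else 0)"
proof -
  have "{(B1, B2). B1 \<subseteq> S \<and> B2 \<subseteq> T \<and> B1 \<inter> B2 = {}} = (SIGMA B1:Pow S. Pow (T - B1))"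
    by auto
  then have "(\<Sum>(B1, B2) | B1 \<subseteq> S \<and> B2 \<subseteq> T \<and> B1 \<inter> B2 = {}. (-1::'a) ^ (card B1 + card B2))
      = (\<Sum>B1\<in>Pow S. (-1) ^ card B1 * (\<Sum>B2\<in>Pow (T - B1). (-1) ^ card B2))"
    using S T by (simp add: sum.Sigma[symmetric] power_add sum_distrib_left)
  also have "\<dots> = (\<Sum>B1\<in>Pow S. (-1) ^ card B1 * 0 ^ card (T - B1))"
    using T by (simp add: sum_power_card_Pow)
  also have "\<dots> = (\<Sum>B1\<in>Pow S. if T \<subseteq> B1 then (-1) ^ card B1 else 0)"
    using T by (intro sum.cong) (auto simp: power_0_left)
  also have "\<dots> = (\<Sum>B1 | B1 \<subseteq> S \<and> T \<subseteq> B1. (-1) ^ card B1)"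
    using S by (simp add: sum.inter_filter[symmetric] Pow_def)
  also have "\<dots> = (if S = T then (-1) ^ card S else 0)"
    using S by (rule sum_sign_supersets)
  finally show ?thesis .
qed

lemma sum_extremal_pairs_sign:
  assumes sp: "signed_poset P"
  shows "(\<Sum>(B1, B2)\<in>extremal_pairs P. (-1::'a::comm_ring_1) ^ (card B1 + card B2))
    = (if E P = {} then (-1) ^ card (V P) else 0) - 1"
proof -
  note finV = is_orientationD(1)[OF signed_posetD(1)[OF sp]]
  define D where "D = {(B1, B2). B1 \<subseteq> sinks P \<and> B2 \<subseteq> sources P \<and> B1 \<inter> B2 = {}}"
  have fin: "finite (sinks P)" "finite (sources P)"
    using finite_subset[OF sinks_subset_V finV] finite_subset[OF sources_subset_V finV] .
  have "finite D"
    unfolding D_def by (rule finite_subset[of _ "Pow (sinks P) \<times> Pow (sources P)"]) (use fin in auto)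
  moreover have "extremal_pairs P = D - {({}, {})}" "({}, {}) \<in> D"
    unfolding extremal_pairs_def D_def by auto
  ultimately have "(\<Sum>(B1, B2)\<in>D. (-1::'a) ^ (card B1 + card B2))
      = 1 + (\<Sum>(B1, B2)\<in>extremal_pairs P. (-1) ^ (card B1 + card B2))"
    by (simp add: sum.remove)
  moreover have "(\<Sum>(B1, B2)\<in>D. (-1::'a) ^ (card B1 + card B2)) = (if E P = {} then (-1) ^ card (V P) else 0)"
  proof -
    have "E P = {} \<Longrightarrow> sinks P = V P" unfolding sinks_def by auto
    then show ?thesis
      using sum_sign_disjoint_subsets[OF fin, where 'a='a] signed_poset_sinks_eq_sources_iff[OF sp]
      unfolding D_def by (cases "E P = {}") simp_all
  qed
  ultimately show ?thesis by (simp add: algebra_simps)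
qed

definition coloring_sign :: "sposet \<Rightarrow> (nat \<Rightarrow> int) \<Rightarrow> 'a::comm_ring_1" where
  "coloring_sign P \<kappa> = (-1) ^ (card (V P) + nat (height (V P) \<kappa>))"

lemma coloring_sign_add_levels:
  assumes ori: "is_orientation P" and p: "(B1, B2) \<in> extremal_pairs P"
    and \<kappa>: "\<kappa> \<in> canonical_colorings (induced P (V P - B1 - B2))"
  shows "coloring_sign P (add_levels P B1 B2 \<kappa>)
    = - ((-1) ^ (card B1 + card B2) * coloring_sign (induced P (V P - B1 - B2)) \<kappa>)"
proof -
  note finV = is_orientationD(1)[OF ori]
  have "nat (height (V P) (add_levels P B1 B2 \<kappa>)) = Suc (nat (height (V P - B1 - B2) \<kappa>))"
    using height_add_levels[OF ori p \<kappa>] height_nonneg[of "V P - B1 - B2" \<kappa>] finV by simp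
  then show ?thesis
    unfolding coloring_sign_def using extremal_pairs_card(1)[OF finV p] by (simp add: power_add)
qed

theorem sum_coloring_sign:
  assumes "signed_poset P"
  shows "(\<Sum>\<kappa>\<in>canonical_colorings P. coloring_sign P \<kappa>) = (1::'a::comm_ring_1)"
  using assms
proof (induction "card (V P)" arbitrary: P rule: less_induct)
  case less
  have ori: "is_orientation P" using signed_posetD(1)[OF less.prems] .
  note finV = is_orientationD(1)[OF ori]
  have inner: "(\<Sum>\<kappa>\<in>canonical_colorings (induced P (V P - B1 - B2)). coloring_sign P (add_levels P B1 B2 \<kappa>))
      = - ((-1::'a) ^ (card B1 + card B2))" if p: "(B1, B2) \<in> extremal_pairs P" for B1 B2
  proof -
    have "card (V (induced P (V P - B1 - B2))) < card (V P)"
      using extremal_pairs_card(2)[OF finV p] by simp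
    moreover have "signed_poset (induced P (V P - B1 - B2))"
      by (rule signed_poset_induced[OF less.prems]) auto
    ultimately have "(\<Sum>\<kappa>\<in>canonical_colorings (induced P (V P - B1 - B2)).
        coloring_sign (induced P (V P - B1 - B2)) \<kappa>) = (1::'a)"
      by (rule less.hyps)
    then show ?thesis
      by (simp add: coloring_sign_add_levels[OF ori p] sum_negf sum_distrib_left[symmetric])
  qed
  have zero: "height (V P) (zero_coloring P) = 0" if "E P = {}"
    using canonical_colorings_height_zero[OF ori] that by auto
  show ?case
    unfolding sum_canonical_colorings[OF ori]
    using inner sum_extremal_pairs_sign[OF less.prems, where 'a='a] zero
    by (simp add: coloring_sign_def case_prod_beta' sum_negf)
qed

lemma sum_extremal_pairs_no_sources:
  assumes fin: "finite (V P)"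
  shows "(\<Sum>(B1, B2)\<in>extremal_pairs P. if B2 = {} then f B1 else 0) = (\<Sum>B\<in>Pow (sinks P) - {{}}. f B)"
proof -
  have "(\<Sum>(B1, B2)\<in>extremal_pairs P. if B2 = {} then f B1 else 0)
      = (\<Sum>(B1, B2)\<in>{p \<in> extremal_pairs P. snd p = {}}. f B1)"
    using finite_extremal_pairs[OF fin] by (simp add: sum.inter_filter case_prod_beta' if_distrib)
  also have "{p \<in> extremal_pairs P. snd p = {}} = (\<lambda>B. (B, {})) ` (Pow (sinks P) - {{}})"
    unfolding extremal_pairs_def by auto
  also have "(\<Sum>(B1, B2)\<in>(\<lambda>B. (B, {})) ` (Pow (sinks P) - {{}}). f B1) = (\<Sum>B\<in>Pow (sinks P) - {{}}. f B)"
    by (subst sum.reindex) (auto simp: inj_on_def)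
  finally show ?thesis .
qed

definition top_weight :: "'a::comm_ring_1 \<Rightarrow> sposet \<Rightarrow> (nat \<Rightarrow> int) \<Rightarrow> 'a" where
  "top_weight x P \<kappa> =
     (if 0 < height (V P) \<kappa> \<and> bottom_level P \<kappa> = {} then (1 - x) ^ card (top_level P \<kappa>) else 0)"

lemma top_weight_add_levels:
  fixes x :: "'a::comm_ring_1"
  assumes ori: "is_orientation P" and p: "(B1, B2) \<in> extremal_pairs P"
    and \<kappa>: "\<kappa> \<in> canonical_colorings (induced P (V P - B1 - B2))"
  shows "coloring_sign P (add_levels P B1 B2 \<kappa>) * top_weight x P (add_levels P B1 B2 \<kappa>)
    = (if B2 = {} then - ((x - 1) ^ card B1) else 0) * coloring_sign (induced P (V P - B1 - B2)) \<kappa>"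
proof -
  have pos: "0 < height (V P) (add_levels P B1 B2 \<kappa>)"
    using height_add_levels[OF ori p \<kappa>] height_nonneg[of "V P - B1 - B2" \<kappa>] is_orientationD(1)[OF ori]
    by simp
  show ?thesis
  proof (cases "B2 = {}")
    case True
    have "(-1) ^ card B1 * (1 - x) ^ card B1 = (x - 1) ^ card B1"
      by (simp add: power_mult_distrib[symmetric])
    moreover have "coloring_sign P (add_levels P B1 B2 \<kappa>) * (1 - x) ^ card B1
        = - (((-1) ^ card B1 * (1 - x) ^ card B1) * coloring_sign (induced P (V P - B1 - B2)) \<kappa>)"
      unfolding coloring_sign_add_levels[OF ori p \<kappa>, where 'a='a] using True by (simp add: algebra_simps)
    ultimately show ?thesis
      using pos levels_add_levels[OF ori p \<kappa>] True unfolding top_weight_def by simp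
  qed (use levels_add_levels[OF ori p \<kappa>] in \<open>simp add: top_weight_def\<close>)
qed

theorem sum_coloring_sign_top_weight:
  fixes x :: "'a::comm_ring_1"
  assumes sp: "signed_poset P"
  shows "(\<Sum>\<kappa>\<in>canonical_colorings P. coloring_sign P \<kappa> * top_weight x P \<kappa>) = 1 - x ^ card (sinks P)"
proof -
  have ori: "is_orientation P" using signed_posetD(1)[OF sp] .
  note finV = is_orientationD(1)[OF ori]
  have inner: "(\<Sum>\<kappa>\<in>canonical_colorings (induced P (V P - B1 - B2)).
      coloring_sign P (add_levels P B1 B2 \<kappa>) * top_weight x P (add_levels P B1 B2 \<kappa>))
    = (if B2 = {} then - ((x - 1) ^ card B1) else 0)" if p: "(B1, B2) \<in> extremal_pairs P" for B1 B2
  proof -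
    have "(\<Sum>\<kappa>\<in>canonical_colorings (induced P (V P - B1 - B2)). coloring_sign (induced P (V P - B1 - B2)) \<kappa>)
        = (1::'a)"
      by (rule sum_coloring_sign, rule signed_poset_induced[OF sp]) auto
    then show ?thesis
      by (simp add: top_weight_add_levels[OF ori p] sum_distrib_left[symmetric])
  qed
  have "height (V P) (zero_coloring P) = 0" if "E P = {}"
    using canonical_colorings_height_zero[OF ori] that by auto
  then have zero: "top_weight x P (zero_coloring P) = 0" if "E P = {}"
    using that unfolding top_weight_def by simp
  have "(\<Sum>B\<in>Pow (sinks P) - {{}}. (x - 1) ^ card B) = x ^ card (sinks P) - 1"
    using sum.remove[of "Pow (sinks P)" "{}" "\<lambda>B. (x - 1) ^ card B"] finite_subset[OF sinks_subset_V finV]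
    by (simp add: sum_power_card_Pow)
  then show ?thesis
    unfolding sum_canonical_colorings[OF ori]
    using inner zero sum_extremal_pairs_no_sources[OF finV, of "\<lambda>B. - ((x - 1) ^ card B)"]
    by (simp add: case_prod_beta' sum_negf)
qed

section \<open>A linear functional realising \<open>phi\<close>\<close>

definition coloring_monomial :: "sposet \<Rightarrow> (nat \<Rightarrow> int) \<Rightarrow> int multiset" where
  "coloring_monomial P \<kappa> = image_mset \<kappa> (mset_set (V P))"

lemma coloring_monomial_simps:
  assumes "finite (V P)"
  shows "set_mset (coloring_monomial P \<kappa>) = \<kappa> ` V P" "size (coloring_monomial P \<kappa>) = card (V P)"
    "count (coloring_monomial P \<kappa>) c = card {v \<in> V P. \<kappa> v = c}"
    "height (set_mset (coloring_monomial P \<kappa>)) id = height (V P) \<kappa>"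
    "canonical (set_mset (coloring_monomial P \<kappa>)) id \<longleftrightarrow> canonical (V P) \<kappa>"
proof -
  show set: "set_mset (coloring_monomial P \<kappa>) = \<kappa> ` V P"
    unfolding coloring_monomial_def using assms by simp
  show "size (coloring_monomial P \<kappa>) = card (V P)" unfolding coloring_monomial_def by simp
  have "count (coloring_monomial P \<kappa>) c = (\<Sum>v | v \<in># mset_set (V P) \<and> c = \<kappa> v. count (mset_set (V P)) v)"
    unfolding coloring_monomial_def by (rule count_image_mset')
  also have "\<dots> = (\<Sum>v\<in>{v \<in> V P. \<kappa> v = c}. 1)"
    using assms by (intro sum.cong) auto
  finally show "count (coloring_monomial P \<kappa>) c = card {v \<in> V P. \<kappa> v = c}" by simp
  show "height (set_mset (coloring_monomial P \<kappa>)) id = height (V P) \<kappa>"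
    "canonical (set_mset (coloring_monomial P \<kappa>)) id \<longleftrightarrow> canonical (V P) \<kappa>"
    unfolding set height_image canonical_image by simp_all
qed

definition monomial_weight :: "int multiset \<Rightarrow> rat poly" where
  "monomial_weight m = (let k = height (set_mset m) id in
     (-1) ^ (size m + nat k) * (1 - (if 0 < k \<and> count m (- k) = 0 then (1 - monom 1 1) ^ count m k else 0)))"

lemma monomial_weight_coloring_monomial:
  assumes fin: "finite (V P)"
  shows "monomial_weight (coloring_monomial P \<kappa>) = coloring_sign P \<kappa> * (1 - top_weight (monom 1 1) P \<kappa>)"
proof -
  have "count (coloring_monomial P \<kappa>) (- height (V P) \<kappa>) = 0 \<longleftrightarrow> bottom_level P \<kappa> = {}"
    unfolding coloring_monomial_simps(3)[OF fin] bottom_level_def using fin by simp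
  then show ?thesis
    unfolding monomial_weight_def coloring_sign_def top_weight_def Let_def coloring_monomial_simps(2-4)[OF fin]
      top_level_def
    by simp
qed

theorem sum_monomial_weight:
  assumes sp: "signed_poset P"
  shows "(\<Sum>\<kappa>\<in>canonical_colorings P. monomial_weight (coloring_monomial P \<kappa>)) = monom 1 (card (sinks P))"
proof -
  note finV = is_orientationD(1)[OF signed_posetD(1)[OF sp]]
  have "(\<Sum>\<kappa>\<in>canonical_colorings P. monomial_weight (coloring_monomial P \<kappa>))
      = (\<Sum>\<kappa>\<in>canonical_colorings P. coloring_sign P \<kappa>)
        - (\<Sum>\<kappa>\<in>canonical_colorings P. coloring_sign P \<kappa> * top_weight (monom 1 1) P \<kappa>)"
    by (simp add: monomial_weight_coloring_monomial[OF finV] algebra_simps sum_subtractf)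
  also have "\<dots> = monom 1 1 ^ card (sinks P)"
    unfolding sum_coloring_sign[OF sp] sum_coloring_sign_top_weight[OF sp] by simp
  finally show ?thesis by (simp add: monom_power)
qed

definition canonical_support :: "fps_Z \<Rightarrow> int multiset set" where
  "canonical_support f = {m. canonical (set_mset m) id \<and> f m \<noteq> 0}"

text \<open>Only canonical monomials are read: every \<open>Y\<^sub>P\<close> has infinitely many monomials in its
  support, but only finitely many canonical ones.\<close>
definition sink_functional :: "fps_Z \<Rightarrow> rat poly" where
  "sink_functional f = (\<Sum>m\<in>canonical_support f. smult (f m) (monomial_weight m))"

lemma Ypos_canonical:
  assumes fin: "finite (V P)" and m: "canonical (set_mset m) id"
  shows "Ypos P m = of_nat (card {\<kappa> \<in> canonical_colorings P. coloring_monomial P \<kappa> = m})"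
proof -
  have "{\<kappa> \<in> V P \<rightarrow>\<^sub>E UNIV. proper_coloring P \<kappa> \<and> preserves P \<kappa> \<and> image_mset \<kappa> (mset_set (V P)) = m}
     = {\<kappa> \<in> canonical_colorings P. coloring_monomial P \<kappa> = m}"
    using m coloring_monomial_simps(5)[OF fin]
    unfolding canonical_colorings_def coloring_monomial_def by blast
  then show ?thesis unfolding Ypos_def by simp
qed

lemma canonical_support_Ypos:
  assumes fin: "finite (V P)"
  shows "canonical_support (Ypos P) = coloring_monomial P ` canonical_colorings P"
proof -
  have nonzero: "Ypos P m \<noteq> 0 \<longleftrightarrow> m \<in> coloring_monomial P ` canonical_colorings P"
    if "canonical (set_mset m) id" for m
    using finite_canonical_colorings[OF fin] unfolding Ypos_canonical[OF fin that]
    by (auto simp: card_eq_0_iff)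
  have "canonical (set_mset (coloring_monomial P \<kappa>)) id" if "\<kappa> \<in> canonical_colorings P" for \<kappa>
    using that coloring_monomial_simps(5)[OF fin] unfolding canonical_colorings_def by simp
  then show ?thesis
    unfolding canonical_support_def using nonzero by blast
qed

lemma sink_functional_Ypos:
  assumes sp: "signed_poset P"
  shows "sink_functional (Ypos P) = monom 1 (card (sinks P))"
proof -
  note finV = is_orientationD(1)[OF signed_posetD(1)[OF sp]]
  note finC = finite_canonical_colorings[OF finV]
  have "sink_functional (Ypos P) = (\<Sum>m\<in>coloring_monomial P ` canonical_colorings P.
      \<Sum>\<kappa>\<in>{\<kappa> \<in> canonical_colorings P. coloring_monomial P \<kappa> = m}. monomial_weight (coloring_monomial P \<kappa>))"
    unfolding sink_functional_def canonical_support_Ypos[OF finV]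
  proof (rule sum.cong[OF refl])
    fix m assume "m \<in> coloring_monomial P ` canonical_colorings P"
    then have "canonical (set_mset m) id"
      using canonical_support_Ypos[OF finV] unfolding canonical_support_def by blast
    moreover have "(\<Sum>\<kappa>\<in>{\<kappa> \<in> canonical_colorings P. coloring_monomial P \<kappa> = m}. monomial_weight (coloring_monomial P \<kappa>))
        = (\<Sum>\<kappa>\<in>{\<kappa> \<in> canonical_colorings P. coloring_monomial P \<kappa> = m}. monomial_weight m)"
      by (rule sum.cong) auto
    ultimately show "smult (Ypos P m) (monomial_weight m)
        = (\<Sum>\<kappa>\<in>{\<kappa> \<in> canonical_colorings P. coloring_monomial P \<kappa> = m}. monomial_weight (coloring_monomial P \<kappa>))"
      using Ypos_canonical[OF finV] by (simp add: of_nat_poly)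
  qed
  also have "\<dots> = (\<Sum>\<kappa>\<in>canonical_colorings P. monomial_weight (coloring_monomial P \<kappa>))"
    using finC by (intro sum.group) auto
  also have "\<dots> = monom 1 (card (sinks P))" using sum_monomial_weight[OF sp] .
  finally show ?thesis .
qed

lemma sink_functional_linear:
  assumes f: "finite (canonical_support f)" and g: "finite (canonical_support g)"
  shows "finite (canonical_support (\<lambda>m. c * f m + g m))"
    "sink_functional (\<lambda>m. c * f m + g m) = smult c (sink_functional f) + sink_functional g"
proof -
  define F where "F = canonical_support f \<union> canonical_support g"
  have finF: "finite F" using f g unfolding F_def by simp
  have sub: "canonical_support (\<lambda>m. c * f m + g m) \<subseteq> F" unfolding F_def canonical_support_def by auto
  then show "finite (canonical_support (\<lambda>m. c * f m + g m))" using finF by (rule finite_subset)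
  have extend: "sink_functional h = (\<Sum>m\<in>F. if canonical (set_mset m) id then smult (h m) (monomial_weight m) else 0)"
    if "canonical_support h \<subseteq> F" for h
    unfolding sink_functional_def
    by (rule sum.mono_neutral_cong_left) (use that finF in \<open>auto simp: canonical_support_def\<close>)
  let ?w = "\<lambda>h m. if canonical (set_mset m) id then smult (h m) (monomial_weight m) else 0"
  have "sink_functional (\<lambda>m. c * f m + g m) = (\<Sum>m\<in>F. smult c (?w f m) + ?w g m)"
    unfolding extend[OF sub] by (rule sum.cong) (auto simp: smult_add_left)
  also have "\<dots> = smult c (\<Sum>m\<in>F. ?w f m) + (\<Sum>m\<in>F. ?w g m)"
    using sum_distrib_left[of "[:c:]" "?w f" F] by (simp add: sum.distrib)
  also have "\<dots> = smult c (sink_functional f) + sink_functional g"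
    using extend[of f] extend[of g] unfolding F_def by simp
  finally show "sink_functional (\<lambda>m. c * f m + g m) = smult c (sink_functional f) + sink_functional g" .
qed

lemma sink_functional_represents:
  assumes "\<forall>(c, P)\<in>set rs. signed_poset P"
  shows "finite (canonical_support (\<lambda>m. \<Sum>(c, P)\<leftarrow>rs. c * Ypos P m)) \<and>
    sink_functional (\<lambda>m. \<Sum>(c, P)\<leftarrow>rs. c * Ypos P m) = (\<Sum>(c, P)\<leftarrow>rs. smult c (monom 1 (card (sinks P))))"
  using assms
proof (induction rs)
  case Nil
  show ?case by (simp add: canonical_support_def sink_functional_def)
next
  case (Cons a rs)
  obtain c P where a: "a = (c, P)" by (cases a)
  have sp: "signed_poset P" using Cons.prems a by auto
  note finV = is_orientationD(1)[OF signed_posetD(1)[OF sp]]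
  have finY: "finite (canonical_support (Ypos P))"
    unfolding canonical_support_Ypos[OF finV] using finite_canonical_colorings[OF finV] by simp
  have IH: "finite (canonical_support (\<lambda>m. \<Sum>(c, P)\<leftarrow>rs. c * Ypos P m))"
    "sink_functional (\<lambda>m. \<Sum>(c, P)\<leftarrow>rs. c * Ypos P m) = (\<Sum>(c, P)\<leftarrow>rs. smult c (monom 1 (card (sinks P))))"
    using Cons by auto
  have "(\<lambda>m. \<Sum>(c, P)\<leftarrow>a # rs. c * Ypos P m) = (\<lambda>m. c * Ypos P m + (\<Sum>(c, P)\<leftarrow>rs. c * Ypos P m))"
    unfolding a by simp
  then show ?case
    using sink_functional_linear[OF finY IH(1)] unfolding sink_functional_Ypos[OF sp] IH(2)
    by (simp add: a)
qed

lemma phi_eq_sink_functional: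
  assumes "represents rs f"
  shows "phi f = sink_functional f"
proof -
  have represented_value: "(\<Sum>(c, P)\<leftarrow>rs. smult c (monom 1 (card (sinks P)))) = sink_functional f"
    if "represents rs f" for rs
    using sink_functional_represents that unfolding represents_def by auto
  show ?thesis
    unfolding phi_def
  proof (rule the_equality)
    show "\<exists>rs. represents rs f \<and> sink_functional f = (\<Sum>(c, P)\<leftarrow>rs. smult c (monom 1 (card (sinks P))))"
      using assms represented_value by metis
  qed (use represented_value in blast)
qed

section \<open>The chain\<close>

text \<open>The chain \<open>0 < 1 < \<dots> < n - 1\<close>: for every \<open>i < j < n\<close> the positive edge
  \<open>prod_encode (i, j)\<close> has its arrow pointing to \<open>j\<close>.\<close>
definition chain_poset :: "nat \<Rightarrow> sposet" where
  "chain_poset n = \<lparr>V = {..<n}, E = {e. fst (prod_decode e) < snd (prod_decode e) \<and> snd (prod_decode e) < n},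
     ends = (\<lambda>e b. if b then snd (prod_decode e) else fst (prod_decode e)), pos = (\<lambda>_. True), arr = (\<lambda>e b. b)\<rparr>"

lemma chain_poset_simps [simp]: "V (chain_poset n) = {..<n}"
  "E (chain_poset n) = {e. fst (prod_decode e) < snd (prod_decode e) \<and> snd (prod_decode e) < n}"
  "ends (chain_poset n) e b = (if b then snd (prod_decode e) else fst (prod_decode e))"
  "pos (chain_poset n) e = True" "arr (chain_poset n) e b = b" "sgnval (chain_poset n) e = 1"
  by (simp_all add: chain_poset_def sgnval_def)

lemma signed_poset_chain_poset: "signed_poset (chain_poset n)"
proof -
  have "E (chain_poset n) \<subseteq> prod_encode ` ({..<n} \<times> {..<n})"
  proof
    fix e assume "e \<in> E (chain_poset n)"
    then have "prod_decode e \<in> {..<n} \<times> {..<n}" by (cases "prod_decode e") auto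
    then show "e \<in> prod_encode ` ({..<n} \<times> {..<n})" by (metis image_eqI prod_decode_inverse)
  qed
  then have "is_orientation (chain_poset n)"
    unfolding is_orientation_def by (auto intro: finite_subset)
  moreover have "\<not> is_cycle (chain_poset n) ws" for ws
  proof
    assume c: "is_cycle (chain_poset n) ws"
    let ?W = "walk_vertices (chain_poset n) ws"
    have cw: "closed_walk (chain_poset n) ws" using c unfolding is_cycle_def by blast
    have wE: "e \<in> E (chain_poset n)" if "e \<in> fst ` set ws" for e
      using closed_walk_edges[OF cw] that by blast
    have "?W \<subseteq> {..<n}" unfolding walk_vertices_def using wE by fastforce
    then have fW: "finite ?W" by (rule finite_subset) simp
    have "ws \<noteq> []" using cw unfolding closed_walk_def by blast
    then have "fst (hd ws) \<in> fst ` set ws" by simp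
    then have "?W \<noteq> {}" unfolding walk_vertices_def by blast
    \<comment> \<open>no arrow leaves the largest vertex of the walk\<close>
    then have "Max ?W \<in> ?W" using fW by simp
    then obtain e b where e: "e \<in> fst ` set ws" "ends (chain_poset n) e b = Max ?W" "\<not> arr (chain_poset n) e b"
      using c unfolding is_cycle_def by blast
    have "snd (prod_decode e) \<in> ?W" unfolding walk_vertices_def using e(1)
      by (auto intro!: exI[of _ e] exI[of _ True])
    then have "snd (prod_decode e) \<le> Max ?W" using fW by simp
    moreover have "fst (prod_decode e) < snd (prod_decode e)" using wE[OF e(1)] by simp
    ultimately show False using e(2,3) by simp
  qed
  ultimately show ?thesis unfolding signed_poset_def by blast
qed

lemma sinks_chain_poset:
  assumes "n > 0"
  shows "sinks (chain_poset n) = {n - 1}"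
proof (intro set_eqI iffI)
  fix v assume v: "v \<in> sinks (chain_poset n)"
  show "v \<in> {n - 1}"
  proof (rule ccontr)
    assume "v \<notin> {n - 1}"
    then have e: "prod_encode (v, n - 1) \<in> E (chain_poset n)" using v unfolding sinks_def by auto
    moreover have "ends (chain_poset n) (prod_encode (v, n - 1)) False = v" by simp
    ultimately have "arr (chain_poset n) (prod_encode (v, n - 1)) False"
      using v unfolding sinks_def by blast
    then show False by simp
  qed
next
  fix v assume "v \<in> {n - 1}"
  then show "v \<in> sinks (chain_poset n)" using assms unfolding sinks_def by auto
qed

lemma proper_preserving_chain_poset_iff:
  "proper_coloring (chain_poset n) \<kappa> \<and> preserves (chain_poset n) \<kappa> \<longleftrightarrow>
    (\<forall>i j. i < j \<longrightarrow> j < n \<longrightarrow> \<kappa> i < \<kappa> j)"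
proof
  assume "proper_coloring (chain_poset n) \<kappa> \<and> preserves (chain_poset n) \<kappa>"
  then have "\<kappa> (fst (prod_decode e)) < \<kappa> (snd (prod_decode e))" if "e \<in> E (chain_poset n)" for e
    using that unfolding proper_preserving_iff by fastforce
  from this[of "prod_encode (i, j)" for i j] show "\<forall>i j. i < j \<longrightarrow> j < n \<longrightarrow> \<kappa> i < \<kappa> j" by simp
next
  assume increasing: "\<forall>i j. i < j \<longrightarrow> j < n \<longrightarrow> \<kappa> i < \<kappa> j"
  have "\<kappa> (fst (prod_decode e)) < \<kappa> (snd (prod_decode e))" if "e \<in> E (chain_poset n)" for e
    using increasing that by simp
  then show "proper_coloring (chain_poset n) \<kappa> \<and> preserves (chain_poset n) \<kappa>"
    unfolding proper_preserving_iff all_bool_eq by fastforce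
qed

lemma distinct_iff_count_mset_le_1: "distinct xs \<longleftrightarrow> (\<forall>x. count (mset xs) x \<le> 1)"
proof -
  have "count (mset xs) x = (if x \<in> set xs then 1 else 0) \<longleftrightarrow> count (mset xs) x \<le> 1" for x
  proof (cases "x \<in> set xs")
    case True
    have "count (mset xs) x \<noteq> 0" using count_mset_gt_0[OF True] by linarith
    then show ?thesis unfolding if_P[OF True] by linarith
  next
    case False
    then have zero: "count (mset xs) x = 0" by simp
    show ?thesis unfolding zero using False by simp
  qed
  then show ?thesis by (simp add: distinct_count_atmost_1)
qed

lemma increasing_coloring_eq_sorted_list:
  fixes \<kappa> :: "nat \<Rightarrow> int"
  assumes \<kappa>: "\<kappa> \<in> {..<n} \<rightarrow>\<^sub>E UNIV" and increasing: "\<forall>i j. i < j \<longrightarrow> j < n \<longrightarrow> \<kappa> i < \<kappa> j"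
    and m: "mset (map \<kappa> [0..<n]) = m"
  shows "size m = n" "\<forall>x. count m x \<le> 1" "\<kappa> = restrict (\<lambda>i. sorted_list_of_multiset m ! i) {..<n}"
proof -
  have "sorted_wrt (<) (map \<kappa> [0..<n])" using increasing by (simp add: sorted_wrt_iff_nth_less)
  then have sorted: "sorted (map \<kappa> [0..<n])" and distinct: "distinct (map \<kappa> [0..<n])"
    by (simp_all add: strict_sorted_iff)
  show "size m = n" using m by (metis length_map length_upt minus_nat.diff_0 size_mset)
  show "\<forall>x. count m x \<le> 1" using distinct m unfolding distinct_iff_count_mset_le_1 by simp
  have xs: "sorted_list_of_multiset m = map \<kappa> [0..<n]"
    using sorted m by (metis sorted_list_of_multiset_mset sorted_sort_id)
  show "\<kappa> = restrict (\<lambda>i. sorted_list_of_multiset m ! i) {..<n}"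
  proof
    fix i
    show "\<kappa> i = restrict (\<lambda>i. sorted_list_of_multiset m ! i) {..<n} i"
    proof (cases "i < n")
      case False
      from PiE_arb[OF \<kappa>, of i] False show ?thesis by simp
    qed (simp add: xs)
  qed
qed

lemma sorted_list_in_increasing_colorings:
  assumes "size m = n" "\<forall>x. count m x \<le> 1"
  shows "restrict (\<lambda>i. sorted_list_of_multiset m ! i) {..<n}
    \<in> {\<kappa> \<in> {..<n} \<rightarrow>\<^sub>E (UNIV :: int set). (\<forall>i j. i < j \<longrightarrow> j < n \<longrightarrow> \<kappa> i < \<kappa> j) \<and> mset (map \<kappa> [0..<n]) = m}"
proof -
  let ?xs = "sorted_list_of_multiset m"
  have "distinct ?xs" using assms(2) unfolding distinct_iff_count_mset_le_1 by simp
  then have "sorted_wrt (<) ?xs" by (simp add: strict_sorted_iff)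
  moreover have len: "length ?xs = n" using assms(1) by (metis mset_sorted_list_of_multiset size_mset)
  moreover have "map (restrict (\<lambda>i. ?xs ! i) {..<n}) [0..<n] = ?xs"
    using len by (intro nth_equalityI) auto
  then have "mset (map (restrict (\<lambda>i. ?xs ! i) {..<n}) [0..<n]) = m" by simp
  ultimately show ?thesis by (simp add: sorted_wrt_iff_nth_less)
qed

lemma increasing_colorings_of_multiset:
  "{\<kappa> \<in> {..<n} \<rightarrow>\<^sub>E (UNIV :: int set). (\<forall>i j. i < j \<longrightarrow> j < n \<longrightarrow> \<kappa> i < \<kappa> j) \<and> mset (map \<kappa> [0..<n]) = m}
    = (if size m = n \<and> (\<forall>x. count m x \<le> 1) then {restrict (\<lambda>i. sorted_list_of_multiset m ! i) {..<n}} else {})"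
  (is "?A = _")
proof -
  have members: "size m = n" "\<forall>x. count m x \<le> 1" "\<kappa> = restrict (\<lambda>i. sorted_list_of_multiset m ! i) {..<n}"
    if "\<kappa> \<in> ?A" for \<kappa>
  proof -
    have "\<kappa> \<in> {..<n} \<rightarrow>\<^sub>E UNIV" "\<forall>i j. i < j \<longrightarrow> j < n \<longrightarrow> \<kappa> i < \<kappa> j" "mset (map \<kappa> [0..<n]) = m"
      using that by blast+
    from increasing_coloring_eq_sorted_list[OF this]
    show "size m = n" "\<forall>x. count m x \<le> 1" "\<kappa> = restrict (\<lambda>i. sorted_list_of_multiset m ! i) {..<n}" .
  qed
  show ?thesis
  proof (cases "size m = n \<and> (\<forall>x. count m x \<le> 1)")
    case True
    have "?A = {restrict (\<lambda>i. sorted_list_of_multiset m ! i) {..<n}}"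
    proof (intro equalityI subsetI)
      fix \<kappa> assume "\<kappa> \<in> ?A"
      then show "\<kappa> \<in> {restrict (\<lambda>i. sorted_list_of_multiset m ! i) {..<n}}" using members(3) by simp
    next
      fix \<kappa> assume "\<kappa> \<in> {restrict (\<lambda>i. sorted_list_of_multiset m ! i) {..<n}}"
      then show "\<kappa> \<in> ?A"
        using sorted_list_in_increasing_colorings[OF conjunct1[OF True] conjunct2[OF True]]
        by (simp only: singleton_iff)
    qed
    then show ?thesis by (simp only: if_P[OF True])
  next
    case False
    have "\<kappa> \<notin> ?A" for \<kappa>
    proof
      assume "\<kappa> \<in> ?A"
      from members(1,2)[OF this] False show False by simp
    qed
    then have "?A = {}" by blast
    then show ?thesis by (simp only: if_not_P[OF False])
  qed
qed

lemma Ypos_chain_poset: "Ypos (chain_poset n) = elem_sym n"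
proof
  fix m
  have "(proper_coloring (chain_poset n) \<kappa> \<and> preserves (chain_poset n) \<kappa> \<and>
      image_mset \<kappa> (mset_set (V (chain_poset n))) = m)
    \<longleftrightarrow> (\<forall>i j. i < j \<longrightarrow> j < n \<longrightarrow> \<kappa> i < \<kappa> j) \<and> mset (map \<kappa> [0..<n]) = m" for \<kappa>
    using proper_preserving_chain_poset_iff[of n \<kappa>] by (auto simp: lessThan_atLeast0)
  then have "{\<kappa> \<in> V (chain_poset n) \<rightarrow>\<^sub>E UNIV. proper_coloring (chain_poset n) \<kappa> \<and> preserves (chain_poset n) \<kappa> \<and>
      image_mset \<kappa> (mset_set (V (chain_poset n))) = m}
    = {\<kappa> \<in> {..<n} \<rightarrow>\<^sub>E UNIV. (\<forall>i j. i < j \<longrightarrow> j < n \<longrightarrow> \<kappa> i < \<kappa> j) \<and> mset (map \<kappa> [0..<n]) = m}"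
    by auto
  then show "Ypos (chain_poset n) m = elem_sym n m"
    unfolding Ypos_def elem_sym_def increasing_colorings_of_multiset by simp
qed

theorem lemma6p9:
  fixes n :: nat
  assumes "n > 0"
  shows "phi (elem_sym n) = monom 1 1"
proof -
  have "represents [(1, chain_poset n)] (elem_sym n)"
    unfolding represents_def using signed_poset_chain_poset by (simp add: Ypos_chain_poset)
  then have "phi (elem_sym n) = sink_functional (Ypos (chain_poset n))"
    unfolding Ypos_chain_poset by (rule phi_eq_sink_functional)
  also have "\<dots> = monom 1 1"
    unfolding sink_functional_Ypos[OF signed_poset_chain_poset] sinks_chain_poset[OF assms] by simp
  finally show ?thesis .
qed

end
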